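(* Let $G$ be an $\alpha$-separable graph with $m$ edges and let $\mathcal{T}$ be a separator tree of $G$ of height $\eta=O(\log m)$ in which, for every non-leaf node $H$, the children of $H$ and the separator $S(H)$ come from a partition as in the definition of $\alpha$-separability (so $|S(H)|\le c\lceil|E(H)|^{\alpha}\rceil$). Let $\mathcal{H}$ be a set of $K$ nodes of $\mathcal{T}$. Then \[\sum_{H\in\mathcal{P}_{\mathcal{T}}(\mathcal{H})}\big(|\partial H|+|S(H)|\big)\le\widetilde{O}(K^{1-\alpha}m^{\alpha}).\]
   Context: A graph $G=(V,E)$ is $\alpha$-separable if there are constants $c>0$, $b\in(0,1)$ such that every nonempty subgraph $H$ of $G$ with $|E(H)|\ge2$ can be partitioned into $H_1,H_2$ with $E(H_1)\cup E(H_2)=E(H)$, $E(H_1)\cap E(H_2)=\emptyset$, $|V(H_1)\cap V(H_2)|\le c\lceil|E(H)|^{\alpha}\rceil$, and $|E(H_i)|\le b|E(H)|$ for $i=1,2$; $S(H)=V(H_1)\cap V(H_2)$. Separator tree: a rooted binary tree $\mathcal{T}$ whose nodes are regions (edge-induced subgraphs) $H$ of $G$, each storing vertex sets $\partial H$, $S(H)$, $F_H$, defined top-down: the root is $G$ with $\partial G=\emptyset$, $F_G=S(G)$; a non-leaf node $H$ has two children $D_1,D_2$ whose edge sets partition $E(H)$, with $V(D_1)\cap V(D_2)=S(H)$, $\partial D_j=(\partial H\cup S(H))\cap V(D_j)$, and $F_H=S(H)\setminus\partial H$; a node with constantly many edges is a leaf with $S(H)=\emptyset$ and $F_H=V(H)\setminus\partial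 H$. For a set $\mathcal{H}$ of nodes, $\mathcal{P}_{\mathcal{T}}(\mathcal{H})$ is the set of all nodes lying on a tree path from some $H\in\mathcal{H}$ to the root (including $H$ and the root). $\widetilde{O}$ hides polylogarithmic factors in $m$. *)

theory Defs
  imports Complex_Main "HOL-Library.Sublist"
begin

text \<open>Subgraphs/regions are represented by their edge sets; the vertex set
  of an edge-induced subgraph is the union of its edges.\<close>

definition verts :: "'v set set \<Rightarrow> 'v set" where
  "verts F = \<Union> F"

definition simple_graph :: "'v set set \<Rightarrow> bool" where
  "simple_graph E \<longleftrightarrow> finite E \<and> (\<forall>e\<in>E. card e = 2)"

definition separable_with :: "real \<Rightarrow> real \<Rightarrow> real \<Rightarrow> 'v set set \<Rightarrow> bool" where
  "separable_with \<alpha> c b E \<longleftrightarrow>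
     (\<forall>F \<subseteq> E. card F \<ge> 2 \<longrightarrow>
        (\<exists>F1 F2. F1 \<union> F2 = F \<and> F1 \<inter> F2 = {} \<and>
           real (card (verts F1 \<inter> verts F2)) \<le> c * real_of_int \<lceil>real (card F) powr \<alpha>\<rceil> \<and>
           real (card F1) \<le> b * real (card F) \<and> real (card F2) \<le> b * real (card F)))"

definition alpha_separable :: "real \<Rightarrow> 'v set set \<Rightarrow> bool" where
  "alpha_separable \<alpha> E \<longleftrightarrow> (\<exists>c b. c > 0 \<and> 0 < b \<and> b < 1 \<and> separable_with \<alpha> c b E)"

text \<open>Separator trees. A node stores its region (edge set) and, if it is an inner node,
  its separator S(H); leaves have S(H) = {}.\<close>
datatype 'v stree =
    Leaf "'v set set"
  | Node "'v set set" "'v set" "'v stree" "'v stree"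

fun region :: "'v stree \<Rightarrow> 'v set set" where
  "region (Leaf F) = F"
| "region (Node F S l r) = F"

fun sep :: "'v stree \<Rightarrow> 'v set" where
  "sep (Leaf F) = {}"
| "sep (Node F S l r) = S"

fun height :: "'v stree \<Rightarrow> nat" where
  "height (Leaf F) = 0"
| "height (Node F S l r) = Suc (max (height l) (height r))"

text \<open>Nodes of the tree are identified by their positions (paths from the root;
  False = first child, True = second child).\<close>
fun positions :: "'v stree \<Rightarrow> bool list set" where
  "positions (Leaf F) = {[]}"
| "positions (Node F S l r) = insert [] ((Cons False ` positions l) \<union> (Cons True ` positions r))"

fun subtree :: "'v stree \<Rightarrow> bool list \<Rightarrow> 'v stree" where
  "subtree t [] = t"
| "subtree (Node F S l r) (False # p) = subtree l p"
| "subtree (Node F S l r) (True # p) = subtree r p"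
| "subtree (Leaf F) (b # p) = Leaf {}"

text \<open>Boundary, computed top-down: bnd B t p is the boundary of the node at position p
  of t, when the root of t has boundary B.
  Child D_j of H gets boundary (boundary H \<union> S(H)) \<inter> V(D_j).\<close>
fun bnd :: "'v set \<Rightarrow> 'v stree \<Rightarrow> bool list \<Rightarrow> 'v set" where
  "bnd B t [] = B"
| "bnd B (Node F S l r) (False # p) = bnd ((B \<union> S) \<inter> verts (region l)) l p"
| "bnd B (Node F S l r) (True # p) = bnd ((B \<union> S) \<inter> verts (region r)) r p"
| "bnd B (Leaf F) (b # p) = {}"

definition boundary :: "'v stree \<Rightarrow> bool list \<Rightarrow> 'v set" where
  "boundary t p = bnd {} t p"

fun valid_splits :: "real \<Rightarrow> real \<Rightarrow> real \<Rightarrow> nat \<Rightarrow> 'v stree \<Rightarrow> bool" where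
  "valid_splits \<alpha> c b L (Leaf F) \<longleftrightarrow> card F \<le> L"
| "valid_splits \<alpha> c b L (Node F S l r) \<longleftrightarrow>
     region l \<union> region r = F \<and> region l \<inter> region r = {} \<and>
     verts (region l) \<inter> verts (region r) = S \<and>
     real (card S) \<le> c * real_of_int \<lceil>real (card F) powr \<alpha>\<rceil> \<and>
     real (card (region l)) \<le> b * real (card F) \<and>
     real (card (region r)) \<le> b * real (card F) \<and>
     valid_splits \<alpha> c b L l \<and> valid_splits \<alpha> c b L r"

definition separator_tree :: "real \<Rightarrow> real \<Rightarrow> real \<Rightarrow> nat \<Rightarrow> 'v set set \<Rightarrow> 'v stree \<Rightarrow> bool" where
  "separator_tree \<alpha> c b L E t \<longleftrightarrow> region t = E \<and> valid_splits \<alpha> c b L t"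

definition root_paths :: "bool list set \<Rightarrow> bool list set" where
  "root_paths Hs = {p. \<exists>q\<in>Hs. prefix p q}"

end

theory Submission
  imports Defs "HOL-Analysis.Convex"
begin

text \<open>Group the nodes of \<open>\<P>\<^sub>\<T>(\<H>)\<close> by depth. At a fixed depth there are at most \<open>K\<close>
  such nodes and their regions are pairwise disjoint, so by concavity of \<open>x \<mapsto> x\<^sup>\<alpha>\<close>
  their separators have total size at most \<open>2c K\<^sup>1\<^sup>-\<^sup>\<alpha> m\<^sup>\<alpha>\<close>. A vertex of \<open>\<partial>H \<union> S(H)\<close> is
  passed on to both children of \<open>H\<close> only if it lies in \<open>S(H)\<close>; hence the boundaries at
  depth \<open>d\<close> have total size at most twice the separators above depth \<open>d\<close>. Summing over
  the \<open>\<eta> + 1 = O(log m)\<close> depths gives the bound \<open>O(\<eta>\<^sup>2 K\<^sup>1\<^sup>-\<^sup>\<alpha> m\<^sup>\<alpha>)\<close>.\<close>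

lemma sum_powr_le_card_powr_sum:
  fixes x :: "'a \<Rightarrow> real"
  assumes "finite I" "\<And>i. i \<in> I \<Longrightarrow> x i \<ge> 0" "0 < \<alpha>" "\<alpha> < 1"
  shows "(\<Sum>i\<in>I. x i powr \<alpha>) \<le> real (card I) powr (1 - \<alpha>) * (\<Sum>i\<in>I. x i) powr \<alpha>"
proof (cases "(\<Sum>i\<in>I. x i) = 0")
  case True
  then have "\<forall>i\<in>I. x i = 0" using assms sum_nonneg_eq_0_iff by blast
  then show ?thesis by simp
next
  case False
  define S where "S = (\<Sum>i\<in>I. x i)"
  define n where "n = real (card I)"
  define s where "s = S / n"
  have "S > 0" using False assms unfolding S_def by (simp add: order_less_le sum_nonneg)
  moreover have "n > 0" using False assms(1) unfolding n_def by (auto simp: card_gt_0_iff)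
  ultimately have "s > 0" by (simp add: s_def)
  \<comment> \<open>Young's inequality against the mean \<open>s\<close>, summed over \<open>I\<close>.\<close>
  have Young: "x i powr \<alpha> * s powr (1 - \<alpha>) \<le> \<alpha> * x i + (1 - \<alpha>) * s" if "i \<in> I" for i
    using Youngs_inequality_0[of \<alpha> "1 - \<alpha>" "x i" s] assms that \<open>s > 0\<close>
    by (cases "x i = 0") (auto simp: order_le_less)
  have "(\<Sum>i\<in>I. x i powr \<alpha>) * s powr (1 - \<alpha>) = (\<Sum>i\<in>I. x i powr \<alpha> * s powr (1 - \<alpha>))"
    by (simp add: sum_distrib_right)
  also have "\<dots> \<le> (\<Sum>i\<in>I. \<alpha> * x i + (1 - \<alpha>) * s)"
    using Young by (rule sum_mono)
  also have "\<dots> = \<alpha> * S + (1 - \<alpha>) * s * n"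
    by (simp add: sum.distrib sum_distrib_left S_def n_def)
  also have "\<dots> = S" using \<open>n > 0\<close> by (simp add: s_def field_simps)
  finally have "(\<Sum>i\<in>I. x i powr \<alpha>) \<le> S / s powr (1 - \<alpha>)"
    using \<open>s > 0\<close> by (simp add: field_simps)
  also have "\<dots> = n powr (1 - \<alpha>) * (S powr \<alpha> * S powr (1 - \<alpha>)) / S powr (1 - \<alpha>)"
    using \<open>S > 0\<close> \<open>n > 0\<close> by (simp add: s_def powr_divide powr_add[symmetric])
  also have "\<dots> = n powr (1 - \<alpha>) * S powr \<alpha>" using \<open>S > 0\<close> by simp
  finally show ?thesis unfolding n_def S_def .
qed

lemma finite_positions: "finite (positions t)"
  by (induction t) auto

lemma length_le_height_if_in_positions: "p \<in> positions t \<Longrightarrow> length p \<le> height t"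
  by (induction t arbitrary: p) (auto simp: le_max_iff_disj)

lemma prefix_in_positions: "q \<in> positions t \<Longrightarrow> prefix p q \<Longrightarrow> p \<in> positions t"
proof (induction t arbitrary: p q)
  case (Node F S l r)
  show ?case
  proof (cases p)
    case (Cons a p')
    with Node.prems obtain q' where "q = a # q'" "prefix p' q'"
      by (auto simp: prefix_Cons)
    with Node Cons show ?thesis by (cases a) auto
  qed simp
qed auto

lemma valid_splits_subtree:
  "valid_splits \<alpha> c b L t \<Longrightarrow> p \<in> positions t \<Longrightarrow> valid_splits \<alpha> c b L (subtree t p)"
  by (induction t arbitrary: p) auto

lemma root_paths_subset_positions: "Hs \<subseteq> positions t \<Longrightarrow> root_paths Hs \<subseteq> positions t"
  unfolding root_paths_def using prefix_in_positions by blast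

lemma prefix_closed_root_paths: "p \<in> root_paths Hs \<Longrightarrow> prefix q p \<Longrightarrow> q \<in> root_paths Hs"
  unfolding root_paths_def by (auto intro: prefix_order.trans)

lemma card_level_root_paths_le:
  assumes "finite Hs"
  shows "card {p \<in> root_paths Hs. length p = d} \<le> card Hs"
proof -
  have "{p \<in> root_paths Hs. length p = d} \<subseteq> take d ` Hs"
    by (auto simp: root_paths_def prefix_def intro!: image_eqI)
  then have "card {p \<in> root_paths Hs. length p = d} \<le> card (take d ` Hs)"
    using assms by (intro card_mono) auto
  also have "\<dots> \<le> card Hs" using assms by (rule card_image_le)
  finally show ?thesis .
qed

lemma sum_positions_split:
  fixes f :: "bool list \<Rightarrow> 'b::comm_monoid_add"
  assumes "finite Q"
  shows "sum f {p \<in> Q. P p} = (if [] \<in> Q \<and> P [] then f [] else 0)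
     + sum (\<lambda>p. f (False # p)) {p. False # p \<in> Q \<and> P (False # p)}
     + sum (\<lambda>p. f (True # p)) {p. True # p \<in> Q \<and> P (True # p)}"
proof -
  let ?Z = "{p \<in> Q. P p \<and> p = []}"
  let ?A = "{p. False # p \<in> Q \<and> P (False # p)}" and ?B = "{p. True # p \<in> Q \<and> P (True # p)}"
  have fin: "finite ?A" "finite ?B"
    using finite_vimageI[OF assms, of "Cons False"] finite_vimageI[OF assms, of "Cons True"]
    by (auto intro: finite_subset)
  have split: "{p \<in> Q. P p} = ?Z \<union> (Cons False ` ?A \<union> Cons True ` ?B)"
  proof (rule set_eqI)
    fix p show "p \<in> {p \<in> Q. P p} \<longleftrightarrow> p \<in> ?Z \<union> (Cons False ` ?A \<union> Cons True ` ?B)"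
    proof (cases p)
      case (Cons a p')
      then show ?thesis by (cases a) auto
    qed auto
  qed
  have "sum f {p \<in> Q. P p} = sum f ?Z + sum f (Cons False ` ?A \<union> Cons True ` ?B)"
    unfolding split using fin assms by (intro sum.union_disjoint) auto
  also have "sum f (Cons False ` ?A \<union> Cons True ` ?B) = sum f (Cons False ` ?A) + sum f (Cons True ` ?B)"
    using fin by (intro sum.union_disjoint) auto
  also have "?Z = (if [] \<in> Q \<and> P [] then {[]} else {})" by auto
  finally show ?thesis
    by (simp add: sum.reindex add.assoc if_distrib[of "sum f"])
qed

lemma sum_le_at_Nil:
  fixes f :: "'a list \<Rightarrow> nat"
  assumes "A \<subseteq> {[]}"
  shows "sum f A \<le> f []"
  using sum_mono2[of "{[]}" A f] assms by auto

lemma sum_le_by_levels: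
  fixes f :: "'a list \<Rightarrow> real"
  assumes "finite P" "\<And>p. p \<in> P \<Longrightarrow> length p \<le> h"
    and "\<And>d. (\<Sum>p\<in>{p \<in> P. length p = d}. f p) \<le> X"
  shows "(\<Sum>p\<in>P. f p) \<le> (real h + 1) * X"
proof -
  have "length ` P \<subseteq> {..h}" using assms(2) by auto
  then have "(\<Sum>p\<in>P. f p) = (\<Sum>d\<in>{..h}. \<Sum>p\<in>{p \<in> P. length p = d}. f p)"
    by (simp add: sum.group[OF assms(1) finite_atMost])
  also have "\<dots> \<le> (\<Sum>d\<in>{..h}. X)" using assms(3) by (rule sum_mono)
  finally show ?thesis by (simp add: add.commute)
qed

lemma card_children_regions_le:
  assumes "valid_splits \<alpha> c b L (Node F S l r)"
  shows "card (region l) + card (region r) \<le> card F"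
proof (cases "finite F")
  case True
  with assms have "card (region l) + card (region r) = card (region l \<union> region r)"
    by (intro card_Un_disjoint[symmetric]) (auto intro: finite_subset)
  with assms show ?thesis by simp
qed (use assms in simp)

lemma sum_card_region_level_le:
  "valid_splits \<alpha> c b L t \<Longrightarrow> Q \<subseteq> positions t \<Longrightarrow>
   (\<Sum>p\<in>{p \<in> Q. length p = d}. card (region (subtree t p))) \<le> card (region t)"
proof (induction t arbitrary: Q d)
  case (Leaf F)
  then have "{p \<in> Q. length p = d} \<subseteq> {[]}" by auto
  then show ?case by (rule order_trans[OF sum_le_at_Nil]) simp
next
  case (Node F S l r)
  have "finite Q" using Node.prems finite_positions finite_subset by blast
  show ?case
  proof (cases d)
    case 0
    then have "{p \<in> Q. length p = d} \<subseteq> {[]}" by auto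
    then show ?thesis by (rule order_trans[OF sum_le_at_Nil]) simp
  next
    case (Suc d')
    have "{p. False # p \<in> Q} \<subseteq> positions l" "{p. True # p \<in> Q} \<subseteq> positions r"
      using Node.prems by auto
    then have "(\<Sum>p\<in>{p. False # p \<in> Q \<and> length p = d'}. card (region (subtree l p))) \<le> card (region l)"
      "(\<Sum>p\<in>{p. True # p \<in> Q \<and> length p = d'}. card (region (subtree r p))) \<le> card (region r)"
      using Node.IH(1)[of "{p. False # p \<in> Q}" d'] Node.IH(2)[of "{p. True # p \<in> Q}" d'] Node.prems(1)
      by simp_all
    moreover have "(\<Sum>p\<in>{p \<in> Q. length p = d}. card (region (subtree (Node F S l r) p))) =
        (\<Sum>p\<in>{p. False # p \<in> Q \<and> length p = d'}. card (region (subtree l p))) +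
        (\<Sum>p\<in>{p. True # p \<in> Q \<and> length p = d'}. card (region (subtree r p)))"
      using sum_positions_split[OF \<open>finite Q\<close>, of "\<lambda>p. card (region (subtree (Node F S l r) p))"] Suc
      by simp
    ultimately show ?thesis
      using card_children_regions_le[OF Node.prems(1)] by simp
  qed
qed

lemma card_sep_le_powr:
  assumes "valid_splits \<alpha> c b L t" "0 < \<alpha>" "c > 0"
  shows "real (card (sep t)) \<le> 2 * c * real (card (region t)) powr \<alpha>"
proof (cases t)
  case (Node F S l r)
  then have sepS: "real (card S) \<le> c * real_of_int \<lceil>real (card F) powr \<alpha>\<rceil>" using assms by simp
  show ?thesis
  proof (cases "card F = 0")
    case False
    then have "real (card F) powr \<alpha> \<ge> 1" using assms by (intro ge_one_powr_ge_zero) auto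
    then have "real_of_int \<lceil>real (card F) powr \<alpha>\<rceil> \<le> 2 * real (card F) powr \<alpha>" by linarith
    with sepS Node assms show ?thesis by (simp add: order_trans mult_left_mono)
  qed (use sepS Node in simp)
qed (use assms in simp)

lemma card_children_boundaries_le:
  assumes "valid_splits \<alpha> c b L (Node F S l r)" "finite B" "finite S"
  shows "card ((B \<union> S) \<inter> verts (region l)) + card ((B \<union> S) \<inter> verts (region r)) \<le> card B + 2 * card S"
proof -
  let ?Bl = "(B \<union> S) \<inter> verts (region l)" and ?Br = "(B \<union> S) \<inter> verts (region r)"
  have "?Bl \<inter> ?Br \<subseteq> S" using assms(1) by auto
  have "card ?Bl + card ?Br = card (?Bl \<union> ?Br) + card (?Bl \<inter> ?Br)"
    using assms by (intro card_Un_Int) auto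
  also have "\<dots> \<le> card (B \<union> S) + card S"
    using assms \<open>?Bl \<inter> ?Br \<subseteq> S\<close> by (intro add_mono card_mono) auto
  also have "card (B \<union> S) \<le> card B + card S" by (rule card_Un_le)
  finally show ?thesis by simp
qed

lemma finite_verts_children:
  assumes "valid_splits \<alpha> c b L (Node F S l r)" "finite (verts F)"
  shows "finite (verts (region l))" "finite (verts (region r))"
proof -
  have "verts (region l) \<subseteq> verts F" "verts (region r) \<subseteq> verts F"
    using assms(1) unfolding verts_def by auto
  then show "finite (verts (region l))" "finite (verts (region r))"
    using assms(2) finite_subset by auto
qed

lemma prefix_closed_Cons_vimage:
  assumes "\<And>p q. p \<in> Q \<Longrightarrow> prefix q p \<Longrightarrow> q \<in> Q" "p \<in> {p. a # p \<in> Q}" "prefix q p"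
  shows "q \<in> {p. a # p \<in> Q}"
  using assms by (auto simp: Cons_prefix_Cons)

lemma sum_card_bnd_level_le:
  "valid_splits \<alpha> c b L t \<Longrightarrow> finite (verts (region t)) \<Longrightarrow> finite B \<Longrightarrow>
   Q \<subseteq> positions t \<Longrightarrow> (\<And>p q. p \<in> Q \<Longrightarrow> prefix q p \<Longrightarrow> q \<in> Q) \<Longrightarrow>
   (\<Sum>p\<in>{p \<in> Q. length p = d}. card (bnd B t p))
     \<le> card B + 2 * (\<Sum>p\<in>{p \<in> Q. length p < d}. card (sep (subtree t p)))"
proof (induction t arbitrary: Q d B)
  case (Leaf F)
  then have "{p \<in> Q. length p = d} \<subseteq> {[]}" by auto
  then show ?case by (rule order_trans[OF sum_le_at_Nil]) simp
next
  case (Node F S l r)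
  consider "Q = {}" | "d = 0" | d' where "[] \<in> Q" "d = Suc d'"
    using Node.prems(5) not0_implies_Suc by (metis Nil_prefix ex_in_conv)
  then show ?case
  proof cases
    case 2
    then have "{p \<in> Q. length p = d} \<subseteq> {[]}" by auto
    then show ?thesis by (rule order_trans[OF sum_le_at_Nil]) simp
  next
    case 3
    define Bl where "Bl = (B \<union> S) \<inter> verts (region l)"
    define Br where "Br = (B \<union> S) \<inter> verts (region r)"
    define Ql where "Ql = {p. False # p \<in> Q}"
    define Qr where "Qr = {p. True # p \<in> Q}"
    have "finite Q" using Node.prems finite_positions finite_subset by blast
    have fin: "finite (verts (region l))" "finite (verts (region r))"
      using finite_verts_children[of \<alpha> c b L F S l r] Node.prems(1,2) by simp_all
    then have "finite S" "finite Bl" "finite Br"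
      using Node.prems(1) unfolding Bl_def Br_def by auto
    have Ql: "Ql \<subseteq> positions l" "\<And>p q. p \<in> Ql \<Longrightarrow> prefix q p \<Longrightarrow> q \<in> Ql"
      using Node.prems(4) prefix_closed_Cons_vimage[OF Node.prems(5)] unfolding Ql_def by auto
    have Qr: "Qr \<subseteq> positions r" "\<And>p q. p \<in> Qr \<Longrightarrow> prefix q p \<Longrightarrow> q \<in> Qr"
      using Node.prems(4) prefix_closed_Cons_vimage[OF Node.prems(5)] unfolding Qr_def by auto
    have IH:
      "(\<Sum>p\<in>{p \<in> Ql. length p = d'}. card (bnd Bl l p))
          \<le> card Bl + 2 * (\<Sum>p\<in>{p \<in> Ql. length p < d'}. card (sep (subtree l p)))"
      "(\<Sum>p\<in>{p \<in> Qr. length p = d'}. card (bnd Br r p))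
          \<le> card Br + 2 * (\<Sum>p\<in>{p \<in> Qr. length p < d'}. card (sep (subtree r p)))"
      using Node.IH(1)[OF _ fin(1) \<open>finite Bl\<close> Ql, where d = d']
        Node.IH(2)[OF _ fin(2) \<open>finite Br\<close> Qr, where d = d'] Node.prems(1)
      by simp_all
    have "card Bl + card Br \<le> card B + 2 * card S"
      unfolding Bl_def Br_def using card_children_boundaries_le[OF Node.prems(1,3) \<open>finite S\<close>] .
    moreover have "(\<Sum>p\<in>{p \<in> Q. length p = d}. card (bnd B (Node F S l r) p)) =
        (\<Sum>p\<in>{p \<in> Ql. length p = d'}. card (bnd Bl l p)) +
        (\<Sum>p\<in>{p \<in> Qr. length p = d'}. card (bnd Br r p))"
      using sum_positions_split[OF \<open>finite Q\<close>, of "\<lambda>p. card (bnd B (Node F S l r) p)"] 3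
      unfolding Bl_def Br_def Ql_def Qr_def by simp
    moreover have "(\<Sum>p\<in>{p \<in> Q. length p < d}. card (sep (subtree (Node F S l r) p))) =
        card S + (\<Sum>p\<in>{p \<in> Ql. length p < d'}. card (sep (subtree l p))) +
        (\<Sum>p\<in>{p \<in> Qr. length p < d'}. card (sep (subtree r p)))"
      using sum_positions_split[OF \<open>finite Q\<close>, of "\<lambda>p. card (sep (subtree (Node F S l r) p))"] 3
      unfolding Ql_def Qr_def by simp
    ultimately show ?thesis using IH by linarith
  qed simp
qed

lemma sum_card_sep_level_le:
  assumes "valid_splits \<alpha> c b L t" "Hs \<subseteq> positions t" "0 < \<alpha>" "\<alpha> < 1" "c > 0"
  shows "(\<Sum>p\<in>{p \<in> root_paths Hs. length p = d}. real (card (sep (subtree t p))))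
           \<le> 2 * c * real (card Hs) powr (1 - \<alpha>) * real (card (region t)) powr \<alpha>"
proof -
  let ?Pd = "{p \<in> root_paths Hs. length p = d}"
  have Pd: "?Pd \<subseteq> positions t" using root_paths_subset_positions[OF assms(2)] by auto
  then have "finite ?Pd" using finite_positions finite_subset by blast
  have "finite Hs" using assms(2) finite_positions finite_subset by blast
  have "(\<Sum>p\<in>?Pd. real (card (sep (subtree t p))))
          \<le> (\<Sum>p\<in>?Pd. 2 * c * real (card (region (subtree t p))) powr \<alpha>)"
    using card_sep_le_powr valid_splits_subtree assms Pd by (intro sum_mono) blast
  also have "\<dots> = 2 * c * (\<Sum>p\<in>?Pd. real (card (region (subtree t p))) powr \<alpha>)"
    by (simp add: sum_distrib_left)
  also have "(\<Sum>p\<in>?Pd. real (card (region (subtree t p))) powr \<alpha>)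
      \<le> real (card ?Pd) powr (1 - \<alpha>) * (\<Sum>p\<in>?Pd. real (card (region (subtree t p)))) powr \<alpha>"
    using sum_powr_le_card_powr_sum[OF \<open>finite ?Pd\<close>] assms by simp
  also have "\<dots> \<le> real (card Hs) powr (1 - \<alpha>) * real (card (region t)) powr \<alpha>"
  proof (intro mult_mono powr_mono2)
    show "real (card ?Pd) \<le> real (card Hs)"
      using card_level_root_paths_le[OF \<open>finite Hs\<close>] by simp
    show "(\<Sum>p\<in>?Pd. real (card (region (subtree t p)))) \<le> real (card (region t))"
      using sum_card_region_level_le[OF assms(1) Pd, of d] by (simp flip: of_nat_sum)
  qed (use assms in \<open>auto intro: sum_nonneg\<close>)
  finally show ?thesis using assms by (simp add: mult.assoc)
qed

lemma sum_root_paths_le: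
  assumes "valid_splits \<alpha> c b L t" "finite (verts (region t))" "Hs \<subseteq> positions t"
    and "0 < \<alpha>" "\<alpha> < 1" "c > 0"
  shows "real (\<Sum>p\<in>root_paths Hs. card (boundary t p) + card (sep (subtree t p)))
           \<le> 6 * c * (real (height t) + 1)\<^sup>2
               * real (card Hs) powr (1 - \<alpha>) * real (card (region t)) powr \<alpha>"
proof -
  define P where "P = root_paths Hs"
  define h where "h = real (height t) + 1"
  define X where "X = 2 * c * real (card Hs) powr (1 - \<alpha>) * real (card (region t)) powr \<alpha>"
  define ST where "ST = (\<Sum>p\<in>P. real (card (sep (subtree t p))))"
  have "P \<subseteq> positions t" unfolding P_def using root_paths_subset_positions[OF assms(3)] .
  then have "finite P" and len: "\<And>p. p \<in> P \<Longrightarrow> length p \<le> height t"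
    using finite_positions finite_subset length_le_height_if_in_positions by blast+
  have sep_level: "(\<Sum>p\<in>{p \<in> P. length p = d}. real (card (sep (subtree t p)))) \<le> X" for d
    unfolding P_def X_def by (rule sum_card_sep_level_le[OF assms(1,3-6)])
  have "ST \<le> h * X"
    using sum_le_by_levels[OF \<open>finite P\<close> len sep_level] unfolding ST_def h_def by simp
  have "ST \<ge> 0" "h \<ge> 1" unfolding ST_def h_def by (simp_all add: sum_nonneg)
  have bnd_level: "(\<Sum>p\<in>{p \<in> P. length p = d}. real (card (boundary t p))) \<le> 2 * ST" for d
  proof -
    have "(\<Sum>p\<in>{p \<in> P. length p = d}. card (bnd {} t p))
            \<le> 2 * (\<Sum>p\<in>{p \<in> P. length p < d}. card (sep (subtree t p)))"
      using sum_card_bnd_level_le[OF assms(1,2) _ \<open>P \<subseteq> positions t\<close>, of "{}" d]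
        prefix_closed_root_paths unfolding P_def by simp
    then have "(\<Sum>p\<in>{p \<in> P. length p = d}. real (card (boundary t p)))
            \<le> 2 * (\<Sum>p\<in>{p \<in> P. length p < d}. real (card (sep (subtree t p))))"
      unfolding boundary_def by (simp flip: of_nat_sum)
    also have "(\<Sum>p\<in>{p \<in> P. length p < d}. real (card (sep (subtree t p)))) \<le> ST"
      unfolding ST_def using \<open>finite P\<close> by (intro sum_mono2) auto
    finally show ?thesis by simp
  qed
  have "real (\<Sum>p\<in>P. card (boundary t p) + card (sep (subtree t p)))
          = (\<Sum>p\<in>P. real (card (boundary t p))) + ST"
    unfolding ST_def by (simp add: sum.distrib)
  also have "\<dots> \<le> h * (2 * ST) + ST"
    using sum_le_by_levels[OF \<open>finite P\<close> len bnd_level] unfolding h_def by simp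
  also have "\<dots> \<le> 3 * h * ST" using mult_left_mono[OF \<open>h \<ge> 1\<close> \<open>ST \<ge> 0\<close>] by (simp add: algebra_simps)
  also have "\<dots> \<le> 3 * h * (h * X)" using \<open>ST \<le> h * X\<close> \<open>h \<ge> 1\<close> by simp
  finally show ?thesis by (simp add: P_def h_def X_def power2_eq_square algebra_simps)
qed

theorem mainTheorem6:
  fixes \<alpha> c b C\<^sub>\<eta> :: real and L :: nat
  assumes "0 < \<alpha>" "\<alpha> < 1" "c > 0" "0 < b" "b < 1" "C\<^sub>\<eta> > 0"
  shows "\<exists>C k. \<forall>(E :: nat set set) t Hs.
     simple_graph E \<and> separable_with \<alpha> c b E \<and>
     separator_tree \<alpha> c b L E t \<and>
     real (height t) \<le> C\<^sub>\<eta> * ln (real (card E) + 2) \<and>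
     Hs \<subseteq> positions t
     \<longrightarrow> real (\<Sum>p\<in>root_paths Hs. card (boundary t p) + card (sep (subtree t p)))
         \<le> C * real (card Hs) powr (1 - \<alpha>) * real (card E) powr \<alpha> * ln (real (card E) + 2) ^ k"
proof (intro exI allI impI)
  fix E :: "nat set set" and t :: "nat stree" and Hs :: "bool list set"
  define A where "A = C\<^sub>\<eta> + 1 / ln 2"
  define \<Lambda> where "\<Lambda> = ln (real (card E) + 2)"
  define W where "W = real (card Hs) powr (1 - \<alpha>) * real (card E) powr \<alpha>"
  assume H: "simple_graph E \<and> separable_with \<alpha> c b E \<and> separator_tree \<alpha> c b L E t \<and>
    real (height t) \<le> C\<^sub>\<eta> * ln (real (card E) + 2) \<and> Hs \<subseteq> positions t"
  then have "finite (verts E)"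
    unfolding simple_graph_def verts_def by (metis finite_Union card.infinite zero_neq_numeral)
  have "real (height t) \<le> C\<^sub>\<eta> * \<Lambda>" using H unfolding \<Lambda>_def by simp
  moreover have "1 \<le> \<Lambda> / ln 2" unfolding \<Lambda>_def by simp
  moreover have "A * \<Lambda> = C\<^sub>\<eta> * \<Lambda> + \<Lambda> / ln 2" unfolding A_def by (simp add: distrib_right)
  ultimately have "real (height t) + 1 \<le> A * \<Lambda>" by linarith
  have "real (\<Sum>p\<in>root_paths Hs. card (boundary t p) + card (sep (subtree t p)))
      \<le> 6 * c * (real (height t) + 1)\<^sup>2 * W"
    using sum_root_paths_le[of \<alpha> c b L t Hs] H assms \<open>finite (verts E)\<close>
    unfolding separator_tree_def W_def by (simp add: mult.assoc)
  also have "\<dots> \<le> 6 * c * (A * \<Lambda>)\<^sup>2 * W"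
    using \<open>real (height t) + 1 \<le> A * \<Lambda>\<close> assms
    by (intro mult_right_mono mult_left_mono power_mono) (auto simp: W_def)
  finally show "real (\<Sum>p\<in>root_paths Hs. card (boundary t p) + card (sep (subtree t p)))
      \<le> 6 * c * A\<^sup>2 * real (card Hs) powr (1 - \<alpha>) * real (card E) powr \<alpha> * ln (real (card E) + 2) ^ 2"
    by (simp add: W_def \<Lambda>_def power_mult_distrib mult_ac)
qed

end
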